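(* On the hard instance $G_{k,m}$ described in the context, for all sufficiently large $k$ (independently of $m$), running Water-Filling yields $x_{u_{t,i}}=1$ immediately after the deadline of $u_{t,i}$, for every $t\in[m-1]$ and $i\in[k]$.
   Context: Fully online fractional matching model: an undirected graph is revealed online; each step is the arrival or the deadline of a vertex; at arrival, edges to previously arrived vertices are revealed; every neighbor of $v$ arrives before $v$'s deadline. The algorithm maintains $x_{uv}\ge 0$ with water-level $x_w:=\sum_{z}x_{wz}\le1$; $x_{uv}$ (with $u$ having the earlier deadline) may only be increased at $u$'s deadline. Water-Filling: at the deadline of $u$, with $N(u)$ the neighbors of $u$ whose deadlines have not been reached, while $x_u<1$ and $\min_{v\in N(u)}x_v<1$, continuously increase $x_{uv}$ at equal rates for all $v\in\arg\min_{v\in N(u)}x_v$. Let $c=2-\sqrt2$, $f(x)=\tfrac12(\ln(1-x)+\ln(1-c+x))+\frac{1}{\sqrt2(x-1)}+\frac{2+\sqrt2-\ln(1-c)}{2}$ on $[0,c]$ (a strictly decreasing bijection onto $[0,1]$), and $h(x)=f(c-f^{-1}(x))$ for $x\in[0,1]$. Hard instance $G_{k,m}$: vertex set $\bigcup_{t\in[m]}(U_t\cup V_t)$ with $U_t=\{u_{t,1},\dots,u_{t,k}\}$, $V_t=\{v_{t,1},\dots,v_{t,k}\}$. Edges: $(u_{t,i},v_{t,j})$ for all $t\in[m]$, $i\in[k]$, $j\ge i$; and $(u_{t,i},u_{t+1,j})$ for all $t\in[m-1]$, $i\in[k]$, $1\le j\le\lfloor k\,h(\tfrac{i-1}{k})\rfloor$.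 All vertices arrive before any deadline. The deadlines of the $u$-vertices come first, in lexicographic order of $(t,i)$; afterwards the deadlines of all $v$-vertices are reached (in any order). *)

theory Defs
  imports Complex_Main
begin

definition c_const :: real where
  "c_const = 2 - sqrt 2"

definition f_fun :: "real \<Rightarrow> real" where
  "f_fun x = (ln (1 - x) + ln (1 - c_const + x)) / 2 + 1 / (sqrt 2 * (x - 1))
             + (2 + sqrt 2 - ln (1 - c_const)) / 2"

text \<open>Inverse of f, a strictly decreasing bijection from [0,c] onto [0,1].\<close>
definition f_inv :: "real \<Rightarrow> real" where
  "f_inv y = (THE x. x \<in> {0..c_const} \<and> f_fun x = y)"

definition h_fun :: "real \<Rightarrow> real" where
  "h_fun x = f_fun (c_const - f_inv x)"

datatype vtx = U nat nat | V nat nat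

definition verts :: "nat \<Rightarrow> nat \<Rightarrow> vtx set" where
  "verts k m = {U t i | t i. t \<in> {1..m} \<and> i \<in> {1..k}}
             \<union> {V t j | t j. t \<in> {1..m} \<and> j \<in> {1..k}}"

fun edge_dir :: "nat \<Rightarrow> nat \<Rightarrow> vtx \<Rightarrow> vtx \<Rightarrow> bool" where
  "edge_dir k m (U t i) (V t' j) =
     (t' = t \<and> t \<in> {1..m} \<and> i \<in> {1..k} \<and> j \<in> {1..k} \<and> i \<le> j)"
| "edge_dir k m (U t i) (U t' j) =
     (t' = t + 1 \<and> t \<in> {1..m-1} \<and> i \<in> {1..k} \<and> 1 \<le> j \<and>
      int j \<le> \<lfloor>real k * h_fun ((real i - 1) / real k)\<rfloor>)"
| "edge_dir k m _ _ = False"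

definition adj :: "nat \<Rightarrow> nat \<Rightarrow> vtx \<Rightarrow> vtx \<Rightarrow> bool" where
  "adj k m a b \<longleftrightarrow> edge_dir k m a b \<or> edge_dir k m b a"

text \<open>Deadlines of the u-vertices, in lexicographic order of (t,i). They all come
  before the deadlines of the v-vertices, which are irrelevant for the statement.\<close>
definition u_deadlines :: "nat \<Rightarrow> nat \<Rightarrow> vtx list" where
  "u_deadlines k m = concat (map (\<lambda>t. map (\<lambda>i. U t i) [1..<k+1]) [1..<m+1])"

text \<open>Neighbours of the vertex whose deadline is the j-th (0-based) u-deadline,
  whose deadlines have not yet been reached.\<close>
definition open_nbrs :: "nat \<Rightarrow> nat \<Rightarrow> nat \<Rightarrow> vtx set" where
  "open_nbrs k m j = {w \<in> verts k m. adj k m (u_deadlines k m ! j) w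
                       \<and> w \<notin> set (take (Suc j) (u_deadlines k m))}"

definition level :: "vtx set \<Rightarrow> (vtx \<Rightarrow> vtx \<Rightarrow> real) \<Rightarrow> vtx \<Rightarrow> real" where
  "level Vs x w = (\<Sum>z\<in>Vs. x w z)"

text \<open>One Water-Filling step at the deadline of u with open neighbourhood N:
  the continuous process raises the levels of the minimum-level neighbours uniformly;
  its outcome is that every neighbour v receives max 0 (L - x_v) for a final
  water level L \<le> 1, and the process stops when x_u = 1 or the minimum neighbour level
  reaches 1 (i.e. L = 1).\<close>
definition wf_step :: "vtx set \<Rightarrow> (vtx \<Rightarrow> vtx \<Rightarrow> real) \<Rightarrow> vtx \<Rightarrow> vtx set
                       \<Rightarrow> (vtx \<Rightarrow> vtx \<Rightarrow> real) \<Rightarrow> bool" where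
  "wf_step Vs x u N x' \<longleftrightarrow>
     (\<exists>L. L \<le> 1 \<and>
        (\<forall>v\<in>N. x' u v = x u v + max 0 (L - level Vs x v) \<and> x' v u = x' u v) \<and>
        (\<forall>a b. \<not> ((a = u \<and> b \<in> N) \<or> (b = u \<and> a \<in> N)) \<longrightarrow> x' a b = x a b) \<and>
        level Vs x' u \<le> 1 \<and>
        (level Vs x' u = 1 \<or> L = 1))"

definition wf_run :: "nat \<Rightarrow> nat \<Rightarrow> (nat \<Rightarrow> vtx \<Rightarrow> vtx \<Rightarrow> real) \<Rightarrow> bool" where
  "wf_run k m xs \<longleftrightarrow>
     xs 0 = (\<lambda>_ _. 0) \<and>
     (\<forall>j < length (u_deadlines k m).
        wf_step (verts k m) (xs j) (u_deadlines k m ! j) (open_nbrs k m j) (xs (Suc j)))"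

end

theory Submission
  imports Defs
begin

text \<open>
  At the deadline of u_{t,r+1} the open neighbourhood N of u lies in the layer V_t \<union> U_{t+1}
  and has at least (k - r) + floor (k h(r/k)) vertices. Water-Filling cannot lift the neighbours
  of u more than 1/|N| above their previous maximum level B, since u would then receive more than
  one unit; and if B + 1/|N| \<le> 1, then u saturates, because otherwise the water level reaches 1
  and u receives at least |N| (1 - B) \<ge> 1. So the levels in layer t stay below the sum of 1/|N|
  over the earlier deadlines of row t, and it suffices that the sum over the whole row is at
  most 1. With y_r = f_inv (r/k), the reflection identity f(c - y) = f(y) + R(y), where
  R = f_reflection_gap, gives k h(r/k) = r + k R(y_r), and comparing f with ln (1 - y) between
  y_{r+1} and y_r bounds the r-th term by (20/19) (ln (1 - y_{r+1}) - ln (1 - y_r)) once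
  k \<ge> 5000. The sum telescopes to (20/19) ln (1 + sqrt 2) < 1.
\<close>

section \<open>The functions f and h\<close>

lemma sqrt2_bounds: "1.414 < sqrt (2::real)" "sqrt (2::real) < 1.415"
proof -
  show "1.414 < sqrt (2::real)" by (rule real_less_rsqrt) (simp add: power2_eq_square)
  have "sqrt 2 < sqrt (1.415\<^sup>2::real)" by (rule real_sqrt_less_mono) (simp add: power2_eq_square)
  then show "sqrt (2::real) < 1.415" by simp
qed

lemma c_const_bounds: "0 < c_const" "c_const < 1" "1 - c_const = sqrt 2 - 1"
  using sqrt2_bounds by (auto simp: c_const_def)

definition f_reflection_gap :: "real \<Rightarrow> real" where
  "f_reflection_gap y = 1 / (sqrt 2 * (1 - y)) - 1 / (sqrt 2 * (1 - c_const + y))"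

lemma f_fun_reflect: "f_fun (c_const - y) = f_fun y + f_reflection_gap y"
proof -
  have "1 - (c_const - y) = 1 - c_const + y" "1 - c_const + (c_const - y) = 1 - y"
    by simp_all
  moreover have "1 / (sqrt 2 * (c_const - y - 1)) = - (1 / (sqrt 2 * (1 - c_const + y)))"
       "1 / (sqrt 2 * (y - 1)) = - (1 / (sqrt 2 * (1 - y)))"
    by (simp_all add: divide_simps algebra_simps)
  ultimately show ?thesis unfolding f_fun_def f_reflection_gap_def by (simp only:) simp
qed

lemma f_fun_has_derivative:
  assumes "c_const - 1 < y" "y < 1"
  shows "(f_fun has_real_derivative -(1 + f_reflection_gap y) / (1 - y)) (at y)"
proof -
  define a b where "a = 1 - y" and "b = 1 - c_const + y"
  have a: "0 < a" and b: "0 < b" using assms by (auto simp: a_def b_def)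
  have ab: "a + b = sqrt 2" by (simp add: a_def b_def c_const_def)
  have "sqrt 2 / (sqrt 2 * (y - 1))\<^sup>2 = 1 / (sqrt 2 * a\<^sup>2)"
    by (simp add: a_def power_mult_distrib power2_commute[of y] divide_simps)
  then have d3: "((\<lambda>x. 1 / (sqrt 2 * (x - 1))) has_real_derivative - 1 / (sqrt 2 * a\<^sup>2)) (at y)"
    using a by (auto intro!: derivative_eq_intros simp: a_def) (simp add: power2_eq_square algebra_simps)
  have d1: "((\<lambda>x. ln (1 - x)) has_real_derivative -1/a) (at y)"
    and d2: "((\<lambda>x. ln (1 - c_const + x)) has_real_derivative 1/b) (at y)"
    using a b by (auto intro!: derivative_eq_intros simp: a_def b_def)
  have "(f_fun has_real_derivative (-1/a + 1/b)/2 + - 1 / (sqrt 2 * a\<^sup>2) + 0) (at y)"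
    unfolding f_fun_def by (intro DERIV_add DERIV_cdivide DERIV_const d1 d2 d3)
  moreover have "(-1/a + 1/b)/2 + - 1 / (sqrt 2 * a\<^sup>2) = -(1 + f_reflection_gap y) / (1 - y)"
  proof -
    have sum_recip: "1/(2*a) + 1/(2*b) = 1 / (sqrt 2 * a * b)"
      using a b ab by (simp add: field_simps)
    have "(-1/a + 1/b)/2 + - 1 / (sqrt 2 * a\<^sup>2) = -1/a + (1/(2*a) + 1/(2*b)) + - 1 / (sqrt 2 * a\<^sup>2)"
      by (simp add: field_simps)
    also have "\<dots> = -1/a + 1 / (sqrt 2 * a * b) + - 1 / (sqrt 2 * a\<^sup>2)"
      by (simp only: sum_recip)
    also have "\<dots> = -(1 + (1 / (sqrt 2 * a) - 1 / (sqrt 2 * b))) / a"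
      using a b by (simp add: field_simps power2_eq_square)
    finally show ?thesis
      unfolding f_reflection_gap_def a_def[symmetric] b_def[symmetric] .
  qed
  ultimately show ?thesis by simp
qed

lemma f_fun_0: "f_fun 0 = 1"
  by (simp add: f_fun_def field_simps)

lemma f_fun_c_const: "f_fun c_const = 0"
proof -
  have "sqrt 2 * (c_const - 1) * (-(2 + sqrt 2) / 2) = 1"
    by (simp add: c_const_def algebra_simps)
  moreover have "sqrt 2 * (c_const - 1) \<noteq> 0"
    using c_const_bounds by simp
  ultimately have "1 / (sqrt 2 * (c_const - 1)) = -(2 + sqrt 2) / 2"
    by (simp add: field_simps)
  then show ?thesis by (simp add: f_fun_def field_simps)
qed

lemma f_reflection_gap_mono:
  assumes "0 \<le> y" "y \<le> z" "z \<le> c_const"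
  shows "f_reflection_gap y \<le> f_reflection_gap z"
proof -
  have "0 < 1 - z" "0 < 1 - c_const + y"
    using assms c_const_bounds by auto
  then have "1 / (sqrt 2 * (1 - y)) \<le> 1 / (sqrt 2 * (1 - z))"
    and "1 / (sqrt 2 * (1 - c_const + z)) \<le> 1 / (sqrt 2 * (1 - c_const + y))"
    using assms by (auto intro!: divide_left_mono mult_left_mono mult_pos_pos)
  then show ?thesis unfolding f_reflection_gap_def by linarith
qed

lemma f_reflection_gap_lower:
  assumes "0 \<le> y" "y \<le> c_const"
  shows "y \<le> 1 + f_reflection_gap y"
proof -
  define s where "s = sqrt (2::real)"
  have s: "1.414 < s" "s < 1.415" "s * s = 2"
    using sqrt2_bounds by (auto simp: s_def)
  have c: "c_const = 2 - s" by (simp add: c_const_def s_def)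
  have y1: "0 < 1 - y" and y2: "0 < s - 1 + y"
    using assms c_const_bounds s by auto
  have "(1 + y) * (1 - y) \<le> 1" by (simp add: algebra_simps)
  then have i1: "1 + y \<le> 1 / (1 - y)" using y1 by (simp add: field_simps)
  have "(s + 1) * (1 - y) * (s - 1 + y) = 1 + (s + 1) * y * (2 - s - y)"
    using s(3) by (simp add: algebra_simps)
  moreover have "0 \<le> (s + 1) * y * (2 - s - y)"
    using assms s c by (intro mult_nonneg_nonneg) auto
  ultimately have i2: "1 / (s - 1 + y) \<le> (s + 1) * (1 - y)"
    using y2 by (simp add: field_simps)
  have "f_reflection_gap y = (1 / (1 - y) - 1 / (s - 1 + y)) / s"
    unfolding f_reflection_gap_def c s_def by (simp add: diff_divide_distrib mult.commute)
  moreover have "((1 + y) - (s + 1) * (1 - y)) / s \<le> (1 / (1 - y) - 1 / (s - 1 + y)) / s"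
    using i1 i2 s by (intro divide_right_mono) auto
  ultimately have "((s + 2) * y - s) / s \<le> f_reflection_gap y"
    by (simp add: algebra_simps)
  moreover have "((s + 2) * y - s) / s = y - 1 + 2 * y / s"
    using s by (simp add: field_simps)
  moreover have "0 \<le> 2 * y / s" using assms s by simp
  ultimately show ?thesis by linarith
qed

lemma f_fun_continuous: "continuous_on {0..c_const} f_fun"
proof (intro continuous_at_imp_continuous_on ballI)
  fix x assume "x \<in> {0..c_const}"
  then have "c_const - 1 < x" "x < 1" using c_const_bounds by auto
  then show "isCont f_fun x" using f_fun_has_derivative DERIV_isCont by blast
qed

lemma f_fun_decrease_quadratic:
  assumes "0 \<le> a" "a \<le> b" "b \<le> c_const"
  shows "(b - a)\<^sup>2 / 2 \<le> f_fun a - f_fun b"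
proof -
  let ?g = "\<lambda>x. f_fun x + (x - a)\<^sup>2 / 2"
  have "?g b \<le> ?g a"
  proof (rule DERIV_nonpos_imp_nonincreasing[OF assms(2)])
    fix x assume x: "a \<le> x" "x \<le> b"
    then have x1: "c_const - 1 < x" "x < 1" "0 \<le> x" "x \<le> c_const"
      using assms c_const_bounds by auto
    have "(?g has_real_derivative -(1 + f_reflection_gap x) / (1 - x) + (x - a)) (at x)"
      using f_fun_has_derivative[OF x1(1,2)] by (auto intro!: derivative_eq_intros)
    moreover have "-(1 + f_reflection_gap x) / (1 - x) + (x - a) \<le> 0"
    proof -
      have gap: "x \<le> 1 + f_reflection_gap x" using f_reflection_gap_lower x1 by auto
      have "(1 + f_reflection_gap x) / (1 - x) - (1 + f_reflection_gap x)
          = (1 + f_reflection_gap x) * x / (1 - x)"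
        using x1 by (simp add: field_simps)
      moreover have "0 \<le> (1 + f_reflection_gap x) * x / (1 - x)"
        using x1 gap by (intro divide_nonneg_pos mult_nonneg_nonneg) auto
      ultimately show ?thesis using gap assms x by linarith
    qed
    ultimately show "\<exists>y. (?g has_real_derivative y) (at x) \<and> y \<le> 0" by blast
  qed
  then show ?thesis by simp
qed

lemma f_fun_decrease_log:
  assumes "0 \<le> a" "a \<le> b" "b \<le> c_const"
  shows "f_fun a - f_fun b \<le> (1 + f_reflection_gap b) * (ln (1 - a) - ln (1 - b))"
proof -
  let ?g = "\<lambda>x. f_fun x - (1 + f_reflection_gap b) * ln (1 - x)"
  have "?g a \<le> ?g b"
  proof (rule DERIV_nonneg_imp_nondecreasing[OF assms(2)])
    fix x assume x: "a \<le> x" "x \<le> b"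
    then have x1: "c_const - 1 < x" "x < 1" "0 \<le> x" "x \<le> c_const"
      using assms c_const_bounds by auto
    have "(?g has_real_derivative
        -(1 + f_reflection_gap x) / (1 - x) - (1 + f_reflection_gap b) * (-1 / (1 - x))) (at x)"
      using f_fun_has_derivative[OF x1(1,2)] x1 by (auto intro!: derivative_eq_intros)
    moreover have "-(1 + f_reflection_gap x) / (1 - x) - (1 + f_reflection_gap b) * (-1 / (1 - x))
        = (f_reflection_gap b - f_reflection_gap x) / (1 - x)"
      by (simp add: diff_divide_distrib add_divide_distrib)
    moreover have "f_reflection_gap x \<le> f_reflection_gap b"
      using f_reflection_gap_mono x1 x assms by auto
    ultimately show "\<exists>y. (?g has_real_derivative y) (at x) \<and> 0 \<le> y"
      using x1 by (auto intro: divide_nonneg_pos)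
  qed
  then show ?thesis by (simp add: algebra_simps)
qed

lemma f_fun_strict_antimono:
  assumes "0 \<le> a" "a < b" "b \<le> c_const"
  shows "f_fun b < f_fun a"
proof -
  have "0 < (b - a)\<^sup>2 / 2" using assms by simp
  then show ?thesis using f_fun_decrease_quadratic[of a b] assms by linarith
qed

lemma f_fun_antimono: "0 \<le> a \<Longrightarrow> a \<le> b \<Longrightarrow> b \<le> c_const \<Longrightarrow> f_fun b \<le> f_fun a"
  using f_fun_strict_antimono[of a b] by (cases "a = b") auto

lemma f_fun_inj_on: "inj_on f_fun {0..c_const}"
proof (rule inj_onI)
  fix x y assume "x \<in> {0..c_const}" "y \<in> {0..c_const}" "f_fun x = f_fun y"
  then show "x = y"
    by (cases x y rule: linorder_cases) (auto dest: f_fun_strict_antimono)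
qed

lemma f_fun_image: "f_fun ` {0..c_const} = {0..1}"
proof
  show "f_fun ` {0..c_const} \<subseteq> {0..1}"
    using f_fun_antimono[of _ c_const] f_fun_antimono[of 0] f_fun_0 f_fun_c_const by fastforce
  show "{0..1} \<subseteq> f_fun ` {0..c_const}"
  proof
    fix x :: real assume "x \<in> {0..1}"
    then obtain y where "0 \<le> y" "y \<le> c_const" "f_fun y = x"
      using IVT2'[of f_fun c_const x 0] f_fun_continuous f_fun_0 f_fun_c_const c_const_bounds by auto
    then show "x \<in> f_fun ` {0..c_const}" by force
  qed
qed

lemma f_inv_eq_the_inv_into: "f_inv = the_inv_into {0..c_const} f_fun"
  by (simp add: fun_eq_iff f_inv_def the_inv_into_def)

lemma f_inv_in_range: "x \<in> {0..1} \<Longrightarrow> f_inv x \<in> {0..c_const}"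
  unfolding f_inv_eq_the_inv_into using the_inv_into_into[OF f_fun_inj_on] f_fun_image by blast

lemma f_fun_f_inv: "x \<in> {0..1} \<Longrightarrow> f_fun (f_inv x) = x"
  unfolding f_inv_eq_the_inv_into using f_the_inv_into_f[OF f_fun_inj_on] f_fun_image by blast

lemma f_inv_f_fun: "y \<in> {0..c_const} \<Longrightarrow> f_inv (f_fun y) = y"
  unfolding f_inv_eq_the_inv_into by (rule the_inv_into_f_f[OF f_fun_inj_on])

lemma f_inv_antimono:
  assumes "0 \<le> x" "x \<le> x'" "x' \<le> 1"
  shows "f_inv x' \<le> f_inv x"
proof (rule ccontr)
  assume "\<not> ?thesis"
  then have "f_fun (f_inv x') < f_fun (f_inv x)"
    using assms f_inv_in_range[of x] f_inv_in_range[of x'] by (intro f_fun_strict_antimono) auto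
  then show False using assms f_fun_f_inv[of x] f_fun_f_inv[of x'] by auto
qed

lemma h_fun_eq: "x \<in> {0..1} \<Longrightarrow> h_fun x = x + f_reflection_gap (f_inv x)"
  unfolding h_fun_def f_fun_reflect using f_fun_f_inv by simp

lemma h_fun_le_1: "x \<in> {0..1} \<Longrightarrow> h_fun x \<le> 1"
  unfolding h_fun_def using f_inv_in_range f_fun_antimono[of 0 "c_const - f_inv x"] f_fun_0
  by fastforce

lemma neg_ln_sqrt2_minus_1_le: "- ln (sqrt 2 - 1) \<le> 19/20"
proof -
  have q: "1 + 19/40 + (19/40)\<^sup>2/2 \<le> exp (19/40::real)"
    by (rule exp_lower_Taylor_quadratic) simp
  have "(1 + 19/40 + (19/40)\<^sup>2/2) * (1 + 19/40 + (19/40)\<^sup>2/2) \<le> exp (19/40::real) * exp (19/40)"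
    using q by (intro mult_mono) (auto simp: power2_eq_square)
  also have "\<dots> = exp (19/20)" by (simp flip: exp_add)
  finally have "2.52 \<le> exp (19/20::real)" by (simp add: power2_eq_square)
  then have "exp (-19/20) \<le> 1 / (2.52::real)"
    by (simp add: exp_minus field_simps)
  also have "\<dots> \<le> sqrt 2 - 1" using sqrt2_bounds by simp
  moreover have "0 < sqrt 2 - (1::real)" using sqrt2_bounds by simp
  ultimately have "-19/20 \<le> ln (sqrt 2 - 1)" by (simp add: ln_ge_iff)
  then show ?thesis by simp
qed

lemma reciprocal_le_of_product_ge_1:
  fixes A D \<delta> :: real
  assumes "1 \<le> A * \<delta>" "0 \<le> \<delta>" "\<delta> \<le> 1/20" "A - 1 \<le> D"
  shows "1 / D \<le> 20/19 * \<delta>"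
proof -
  have prod: "19/20 \<le> (A - 1) * \<delta>" using assms by (simp add: algebra_simps)
  then have "0 < A - 1" using assms(2) mult_nonpos_nonneg[of "A - 1" \<delta>] by linarith
  then have "1 / D \<le> 1 / (A - 1)" using assms(4) by (intro divide_left_mono) auto
  also have "\<dots> \<le> 20/19 * \<delta>" using \<open>0 < A - 1\<close> prod by (simp add: divide_le_eq algebra_simps)
  finally show ?thesis .
qed

lemma ln_gap_le:
  assumes "0 \<le> a" "a \<le> b" "b \<le> c_const" "b - a \<le> 1/50"
  shows "ln (1 - a) - ln (1 - b) \<le> 1/20"
proof -
  have b: "2/5 \<le> 1 - b" using assms sqrt2_bounds by (simp add: c_const_def)
  then have "ln (1 - a) - ln (1 - b) = ln ((1 - a) / (1 - b))"
    using assms by (simp add: ln_div)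
  also have "\<dots> \<le> (1 - a) / (1 - b) - 1"
    using assms b by (intro ln_le_minus_one) simp
  also have "\<dots> = (b - a) / (1 - b)" using b by (simp add: field_simps)
  also have "\<dots> \<le> (b - a) / (2/5)" using assms b by (intro divide_left_mono) auto
  finally show ?thesis using assms by simp
qed

text \<open>The number of neighbours of u_{t,r+1} in U_{t+1}; note that r is 0-based.\<close>

definition forward_degree :: "nat \<Rightarrow> nat \<Rightarrow> nat" where
  "forward_degree k r = nat \<lfloor>real k * h_fun (real r / real k)\<rfloor>"

lemma forward_degree_le: "r \<le> k \<Longrightarrow> forward_degree k r \<le> k"
proof -
  assume "r \<le> k"
  then have "real r / real k \<in> {0..1}"
    by (cases "k = 0") (auto simp: divide_le_eq_1)
  then have "real k * h_fun (real r / real k) \<le> real k * 1"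
    using h_fun_le_1 by (intro mult_left_mono) auto
  then show ?thesis unfolding forward_degree_def by linarith
qed

lemma inverse_degree_le_ln_step:
  assumes k: "5000 \<le> k" and r: "r < k"
  shows "1 / (real (k - r) + real (forward_degree k r))
    \<le> 20/19 * (ln (1 - f_inv (real (Suc r) / real k)) - ln (1 - f_inv (real r / real k)))"
proof -
  define a b where "a = f_inv (real (Suc r) / real k)" and "b = f_inv (real r / real k)"
  have x: "real r / real k \<in> {0..1}" "real (Suc r) / real k \<in> {0..1}"
    using r by auto
  have ab: "0 \<le> a" "a \<le> b" "b \<le> c_const"
    using f_inv_in_range[OF x(1)] f_inv_in_range[OF x(2)] x
      f_inv_antimono[of "real r / real k" "real (Suc r) / real k"]
    by (auto simp: a_def b_def divide_right_mono)
  have step: "f_fun a - f_fun b = 1 / real k"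
    using f_fun_f_inv[OF x(1)] f_fun_f_inv[OF x(2)] by (simp add: a_def b_def add_divide_distrib)
  txt \<open>For k \<ge> 5000 consecutive points y_r lie within 1/50 of each other.\<close>
  have "1 / real k \<le> 1 / 5000" using k by (intro divide_left_mono) auto
  then have "(b - a)\<^sup>2 / 2 \<le> 1 / 5000"
    using f_fun_decrease_quadratic[OF ab] step by linarith
  then have "(b - a)\<^sup>2 \<le> (1/50)\<^sup>2" by (simp add: power2_eq_square)
  then have "b - a \<le> 1/50" by (rule power2_le_imp_le) simp
  then have "ln (1 - a) - ln (1 - b) \<le> 1/20" by (rule ln_gap_le[OF ab])
  moreover have "1 \<le> real k * (1 + f_reflection_gap b) * (ln (1 - a) - ln (1 - b))"
    using f_fun_decrease_log[OF ab] step k by (simp add: field_simps)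
  moreover have "0 \<le> ln (1 - a) - ln (1 - b)"
    using ab c_const_bounds by simp
  moreover have "real k * (1 + f_reflection_gap b) - 1 \<le> real (k - r) + real (forward_degree k r)"
  proof -
    have "real k * h_fun (real r / real k) - 1 \<le> real (forward_degree k r)"
      unfolding forward_degree_def by linarith
    moreover have "real k * h_fun (real r / real k) = real r + real k * f_reflection_gap b"
      using h_fun_eq[OF x(1)] k by (simp add: b_def field_simps)
    ultimately show ?thesis using r by (simp add: of_nat_diff algebra_simps)
  qed
  ultimately show ?thesis
    unfolding a_def b_def by (intro reciprocal_le_of_product_ge_1) auto
qed

lemma sum_inverse_degrees_le_1:
  assumes k: "5000 \<le> k"
  shows "(\<Sum>r<k. 1 / (real (k - r) + real (forward_degree k r))) \<le> 1"
proof -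
  define y where "y r = f_inv (real r / real k)" for r
  have "(\<Sum>r<k. 1 / (real (k - r) + real (forward_degree k r)))
      \<le> (\<Sum>r<k. 20/19 * (ln (1 - y (Suc r)) - ln (1 - y r)))"
    unfolding y_def using inverse_degree_le_ln_step[OF k] by (intro sum_mono) auto
  also have "\<dots> = 20/19 * (ln (1 - y k) - ln (1 - y 0))"
    by (subst sum_distrib_left[symmetric]) (simp only: sum_lessThan_telescope[of "\<lambda>r. ln (1 - y r)"])
  also have "\<dots> = 20/19 * (- ln (sqrt 2 - 1))"
    using k f_inv_f_fun[of 0] f_inv_f_fun[of c_const] f_fun_0 f_fun_c_const c_const_bounds
    by (simp add: y_def)
  also have "\<dots> \<le> 20/19 * (19/20)"
    using neg_ln_sqrt2_minus_1_le by simp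
  finally show ?thesis by simp
qed

section \<open>Neighbourhoods in the hard instance\<close>

lemma u_deadlines_eq_map:
  assumes "0 < k"
  shows "u_deadlines k m = map (\<lambda>j. U (j div k + 1) (j mod k + 1)) [0..<m * k]"
proof (induction m)
  case 0
  then show ?case by (simp add: u_deadlines_def)
next
  case (Suc m)
  have "map (U (Suc m)) [1..<k + 1] = map (\<lambda>j. U (j div k + 1) (j mod k + 1)) [m * k..<m * k + k]"
    using assms by (intro nth_equalityI) (auto simp del: upt_Suc)
  moreover have "[0..<m * k + k] = [0..<m * k] @ [m * k..<m * k + k]"
    by (rule upt_add_eq_append) simp
  ultimately show ?case
    using Suc by (simp add: u_deadlines_def add.commute[of k])
qed

lemma length_u_deadlines: "0 < k \<Longrightarrow> length (u_deadlines k m) = m * k"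
  by (simp add: u_deadlines_eq_map)

lemma nth_u_deadlines:
  "0 < k \<Longrightarrow> j < m * k \<Longrightarrow> u_deadlines k m ! j = U (j div k + 1) (j mod k + 1)"
  by (simp add: u_deadlines_eq_map)

lemma set_take_u_deadlines:
  assumes "0 < k" "j < m * k"
  shows "set (take (Suc j) (u_deadlines k m)) = (\<lambda>j'. U (j' div k + 1) (j' mod k + 1)) ` {..j}"
proof -
  have "take (Suc j) [0..<m * k] = [0..<Suc j]"
    using assms by (simp add: take_upt min_def del: upt_Suc)
  then show ?thesis
    using assms by (simp add: u_deadlines_eq_map take_map atLeast0LessThan lessThan_Suc_atMost del: upt_Suc)
qed

lemma u_deadline_in_verts:
  assumes "0 < k" "j < m * k"
  shows "u_deadlines k m ! j \<in> verts k m"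
proof -
  have "j div k < m" using assms by (simp add: div_less_iff_less_mult)
  then show ?thesis using assms by (auto simp: nth_u_deadlines verts_def Suc_le_eq)
qed

lemma u_deadline_notin_open_nbrs:
  "j < length (u_deadlines k m) \<Longrightarrow> u_deadlines k m ! j \<notin> open_nbrs k m j"
  by (auto simp: open_nbrs_def in_set_conv_nth intro: exI[of _ j])

lemma finite_verts: "finite (verts k m)"
proof -
  have "verts k m \<subseteq> case_prod U ` ({1..m} \<times> {1..k}) \<union> case_prod V ` ({1..m} \<times> {1..k})"
    unfolding verts_def by auto
  then show ?thesis by (rule finite_subset) auto
qed

lemma open_nbrs_subset_verts: "open_nbrs k m j \<subseteq> verts k m"
  by (auto simp: open_nbrs_def)

lemma finite_open_nbrs: "finite (open_nbrs k m j)"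
  using finite_verts open_nbrs_subset_verts by (rule rev_finite_subset)

definition layer :: "nat \<Rightarrow> vtx set" where
  "layer t = range (V t) \<union> range (U (Suc t))"

lemma layer_unique: "w \<in> layer t \<Longrightarrow> w \<in> layer t' \<Longrightarrow> t = t'"
  by (auto simp: layer_def)

lemma open_nbrs_subset_layer:
  assumes k: "0 < k" and j: "j < m * k"
  shows "open_nbrs k m j \<subseteq> layer (j div k + 1)"
proof
  fix w assume w: "w \<in> open_nbrs k m j"
  define t where "t = j div k + 1"
  have adj: "adj k m (U t (j mod k + 1)) w"
    and fresh: "w \<notin> set (take (Suc j) (u_deadlines k m))"
    using w nth_u_deadlines[OF k j] by (auto simp: open_nbrs_def t_def)
  show "w \<in> layer t"
  proof (cases w)
    case (V t' q)
    then show ?thesis using adj by (auto simp: adj_def layer_def)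
  next
    case (U t' q)
    have "\<not> edge_dir k m (U t' q) (U t (j mod k + 1))"
    proof
      assume "edge_dir k m (U t' q) (U t (j mod k + 1))"
      then have t': "t = t' + 1" "1 \<le> t'" and q: "1 \<le> q" "q \<le> k" by auto
      obtain b where b: "q = Suc b" "b < k" using q by (cases q) auto
      define j' where "j' = (t' - 1) * k + b"
      have "j' div k = t' - 1" "j' mod k = b"
        using b by (simp_all add: j'_def)
      moreover have "j' \<le> j"
      proof -
        have "j' < (t' - 1) * k + k" using b by (simp add: j'_def)
        also have "\<dots> = j div k * k" using t' by (cases t') (auto simp: t_def)
        also have "\<dots> \<le> j" by (rule div_times_less_eq_dividend)
        finally show ?thesis by simp
      qed
      ultimately have "j' \<in> {..j}" "w = U (j' div k + 1) (j' mod k + 1)"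
        using t' b U by auto
      then have "w \<in> set (take (Suc j) (u_deadlines k m))"
        unfolding set_take_u_deadlines[OF k j] by blast
      then show False using fresh by simp
    qed
    then show ?thesis using adj U by (auto simp: adj_def layer_def)
  qed
qed

lemma open_nbrs_superset:
  assumes k: "0 < k" and j: "j < m * k" and row: "j div k + 1 \<le> m - 1"
  shows "V (j div k + 1) ` {j mod k + 1..k} \<union> U (j div k + 2) ` {1..forward_degree k (j mod k)}
    \<subseteq> open_nbrs k m j"
proof -
  define t r where "t = j div k + 1" and "r = j mod k"
  have r: "r < k" using k by (simp add: r_def)
  have u: "u_deadlines k m ! j = U t (r + 1)"
    using nth_u_deadlines[OF k j] by (simp add: t_def r_def)
  have old: "set (take (Suc j) (u_deadlines k m)) \<subseteq> {U t' i | t' i. t' \<le> t}"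
    unfolding set_take_u_deadlines[OF k j] by (auto simp: t_def div_le_mono)
  have "V t q \<in> open_nbrs k m j" if "q \<in> {r + 1..k}" for q
    using that row old by (auto simp: open_nbrs_def u verts_def adj_def t_def)
  moreover have "U (t + 1) q \<in> open_nbrs k m j" if q: "q \<in> {1..forward_degree k r}" for q
  proof -
    have "q \<le> k" using q forward_degree_le[of r k] r by auto
    moreover have "int q \<le> \<lfloor>real k * h_fun (real r / real k)\<rfloor>"
      using q by (auto simp: forward_degree_def)
    ultimately show ?thesis
      using q row r old by (auto simp: open_nbrs_def u verts_def adj_def t_def)
  qed
  ultimately show ?thesis by (auto simp: t_def r_def numeral_2_eq_2)
qed

lemma card_open_nbrs_ge:
  assumes "0 < k" "j < m * k" "j div k + 1 \<le> m - 1"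
  shows "k - j mod k + forward_degree k (j mod k) \<le> card (open_nbrs k m j)"
proof -
  have "card (V (j div k + 1) ` {j mod k + 1..k} \<union> U (j div k + 2) ` {1..forward_degree k (j mod k)})
      = k - j mod k + forward_degree k (j mod k)"
    by (subst card_Un_disjoint) (auto simp: card_image inj_on_def)
  then show ?thesis
    using card_mono[OF finite_open_nbrs open_nbrs_superset[OF assms]] by simp
qed

section \<open>Water-Filling on the hard instance\<close>

text \<open>The sum is empty as long as the deadlines of row t have not begun.\<close>

definition layer_bound :: "nat \<Rightarrow> nat \<Rightarrow> nat \<Rightarrow> nat \<Rightarrow> real" where
  "layer_bound k m t j = (\<Sum>j'\<in>{(t - 1) * k..<j}. 1 / real (card (open_nbrs k m j')))"

lemma layer_bound_nonneg: "0 \<le> layer_bound k m t j"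
  unfolding layer_bound_def by (intro sum_nonneg) auto

lemma layer_bound_mono: "j \<le> j' \<Longrightarrow> layer_bound k m t j \<le> layer_bound k m t j'"
  unfolding layer_bound_def by (intro sum_mono2) auto

lemma layer_bound_Suc:
  "(t - 1) * k \<le> j \<Longrightarrow>
    layer_bound k m t (Suc j) = layer_bound k m t j + 1 / real (card (open_nbrs k m j))"
  unfolding layer_bound_def by (simp add: sum.atLeastLessThan_Suc)

lemma layer_bound_row_le_1:
  assumes k: "5000 \<le> k" and t: "1 \<le> t" "t \<le> m - 1"
  shows "layer_bound k m t (t * k) \<le> 1"
proof -
  have "t * k = k + (t - 1) * k" using t by (cases t) auto
  then have "layer_bound k m t (t * k) = (\<Sum>r<k. 1 / real (card (open_nbrs k m (r + (t - 1) * k))))"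
    unfolding layer_bound_def using sum.shift_bounds_nat_ivl[of _ 0 "(t - 1) * k" k]
    by (simp add: lessThan_atLeast0)
  also have "\<dots> \<le> (\<Sum>r<k. 1 / (real (k - r) + real (forward_degree k r)))"
  proof (rule sum_mono)
    fix r assume r: "r \<in> {..<k}"
    define j where "j = r + (t - 1) * k"
    have jdm: "j div k = t - 1" "j mod k = r" using r by (simp_all add: j_def)
    have "j < m * k"
    proof -
      have "j < k + (t - 1) * k" using r by (simp add: j_def)
      also have "\<dots> \<le> m * k"
        using t \<open>t * k = k + (t - 1) * k\<close> by (metis diff_le_self le_trans mult_le_mono1)
      finally show ?thesis .
    qed
    then have "k - r + forward_degree k r \<le> card (open_nbrs k m j)"
      using card_open_nbrs_ge[of k j m] k t jdm by simp
    moreover have "0 < real (k - r) + real (forward_degree k r)" using r by simp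
    ultimately show "1 / real (card (open_nbrs k m (r + (t - 1) * k)))
        \<le> 1 / (real (k - r) + real (forward_degree k r))"
      unfolding j_def[symmetric] by (intro divide_left_mono) auto
  qed
  also have "\<dots> \<le> 1" by (rule sum_inverse_degrees_le_1[OF k])
  finally show ?thesis .
qed

definition allocation :: "(vtx \<Rightarrow> vtx \<Rightarrow> real) \<Rightarrow> bool" where
  "allocation x \<longleftrightarrow> (\<forall>a b. x a b = x b a \<and> 0 \<le> x a b)"

lemma wf_step_allocation:
  assumes step: "wf_step Vs x u N x'" and x: "allocation x"
  shows "allocation x'"
proof -
  obtain L where upd: "\<forall>v\<in>N. x' u v = x u v + max 0 (L - level Vs x v) \<and> x' v u = x' u v"
    and keep: "\<forall>a b. \<not> ((a = u \<and> b \<in> N) \<or> (b = u \<and> a \<in> N)) \<longrightarrow> x' a b = x a b"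
    using step unfolding wf_step_def by blast
  have nonneg: "0 \<le> x' u v" if "v \<in> N" for v
    using upd that x unfolding allocation_def by simp
  show ?thesis unfolding allocation_def
  proof (intro allI)
    fix a b
    consider "a = u \<and> b \<in> N" | "b = u \<and> a \<in> N" | "\<not> ((a = u \<and> b \<in> N) \<or> (b = u \<and> a \<in> N))"
      by blast
    then show "x' a b = x' b a \<and> 0 \<le> x' a b"
    proof cases
      case 3
      then have "x' a b = x a b" "x' b a = x b a" using keep by blast+
      then show ?thesis using x unfolding allocation_def by simp
    qed (use upd nonneg in auto)
  qed
qed

lemma sum_add_if_subset:
  "finite A \<Longrightarrow> B \<subseteq> A \<Longrightarrow> (\<Sum>z\<in>A. f z + (if z \<in> B then g z else 0)) = sum f A + sum g B"
  by (simp add: sum.distrib sum.If_cases Int_absorb1)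

lemma wf_step_levels:
  assumes step: "wf_step Vs x u N x'" and Vs: "finite Vs" "N \<subseteq> Vs" "u \<in> Vs" "u \<notin> N"
    and x: "allocation x"
  obtains L where "level Vs x' u \<le> 1" "level Vs x' u = 1 \<or> L = 1"
    "\<And>w. w \<notin> N \<Longrightarrow> w \<noteq> u \<Longrightarrow> level Vs x' w = level Vs x w"
    "\<And>w. w \<in> N \<Longrightarrow> level Vs x' w = max (level Vs x w) L"
    "level Vs x' u = level Vs x u + (\<Sum>v\<in>N. max 0 (L - level Vs x v))"
proof -
  obtain L where upd: "\<forall>v\<in>N. x' u v = x u v + max 0 (L - level Vs x v) \<and> x' v u = x' u v"
    and keep: "\<forall>a b. \<not> ((a = u \<and> b \<in> N) \<or> (b = u \<and> a \<in> N)) \<longrightarrow> x' a b = x a b"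
    and u_le: "level Vs x' u \<le> 1" and stop: "level Vs x' u = 1 \<or> L = 1"
    using step unfolding wf_step_def by blast
  have other: "level Vs x' w = level Vs x w" if "w \<notin> N" "w \<noteq> u" for w
    unfolding level_def using keep that by (auto intro!: sum.cong)
  have nbr: "level Vs x' w = max (level Vs x w) L" if w: "w \<in> N" for w
  proof -
    have "x' w u = x w u + max 0 (L - level Vs x w)"
      using upd w x unfolding allocation_def by metis
    moreover have "x' w z = x w z" if "z \<noteq> u" for z
      using keep w Vs(4) that by metis
    ultimately have "x' w z = x w z + (if z = u then max 0 (L - level Vs x w) else 0)" for z
      by simp
    then have "level Vs x' w = level Vs x w + max 0 (L - level Vs x w)"
      unfolding level_def using Vs by (simp add: sum.distrib)
    then show ?thesis by (simp add: max_def)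
  qed
  have gain: "level Vs x' u = level Vs x u + (\<Sum>v\<in>N. max 0 (L - level Vs x v))"
  proof -
    have "x' u z = x u z + (if z \<in> N then max 0 (L - level Vs x z) else 0)" for z
    proof (cases "z \<in> N")
      case True
      then show ?thesis using upd by simp
    next
      case False
      then show ?thesis using keep Vs(4) by simp
    qed
    then show ?thesis
      unfolding level_def using Vs by (simp add: sum_add_if_subset)
  qed
  show ?thesis by (rule that[OF u_le stop other nbr gain])
qed

lemma wf_step_saturation:
  assumes step: "wf_step Vs x u N x'" and Vs: "finite Vs" "N \<subseteq> Vs" "u \<in> Vs" "u \<notin> N"
    and x: "allocation x" and N: "N \<noteq> {}" and below: "\<forall>v\<in>N. level Vs x v \<le> B"
  shows "\<forall>w\<in>N. level Vs x' w \<le> B + 1 / card N"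
    and "B + 1 / card N \<le> 1 \<Longrightarrow> level Vs x' u = 1"
proof -
  obtain L where u_le: "level Vs x' u \<le> 1" and stop: "level Vs x' u = 1 \<or> L = 1"
    and "\<And>w. w \<notin> N \<Longrightarrow> w \<noteq> u \<Longrightarrow> level Vs x' w = level Vs x w"
    and nbr: "\<And>w. w \<in> N \<Longrightarrow> level Vs x' w = max (level Vs x w) L"
    and u_eq: "level Vs x' u = level Vs x u + (\<Sum>v\<in>N. max 0 (L - level Vs x v))"
    using wf_step_levels[OF step Vs x] by metis
  have "finite N" using Vs(1,2) by (rule rev_finite_subset)
  then have card: "0 < real (card N)" using N by (simp add: card_gt_0_iff)
  have "0 \<le> level Vs x u"
    using x unfolding level_def allocation_def by (simp add: sum_nonneg)
  moreover have "(\<Sum>v\<in>N. L - B) \<le> (\<Sum>v\<in>N. max 0 (L - level Vs x v))"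
    using below by (intro sum_mono) auto
  moreover have "(\<Sum>v\<in>N. L - B) = real (card N) * (L - B)" by simp
  ultimately have pour: "real (card N) * (L - B) \<le> level Vs x' u"
    using u_eq by linarith
  then have L: "L \<le> B + 1 / card N"
    using u_le card by (simp add: field_simps)
  show "\<forall>w\<in>N. level Vs x' w \<le> B + 1 / card N"
  proof
    fix w assume w: "w \<in> N"
    have "level Vs x w \<le> B" "0 \<le> 1 / real (card N)" using below w by simp_all
    then have "level Vs x w \<le> B + 1 / card N" by linarith
    then show "level Vs x' w \<le> B + 1 / card N" using nbr[OF w] L by simp
  qed
  show "level Vs x' u = 1" if "B + 1 / card N \<le> 1"
  proof (rule ccontr)
    assume "level Vs x' u \<noteq> 1"
    with stop have "L = 1" by simp
    with that card have "1 \<le> real (card N) * (L - B)" by (simp add: field_simps)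
    with pour u_le \<open>level Vs x' u \<noteq> 1\<close> show False by linarith
  qed
qed

lemma wf_run_step:
  assumes "wf_run k m xs" "0 < k" "j < m * k"
  shows "wf_step (verts k m) (xs j) (u_deadlines k m ! j) (open_nbrs k m j) (xs (Suc j))"
  using assms length_u_deadlines[of k m] unfolding wf_run_def by simp

lemma wf_run_allocation:
  assumes run: "wf_run k m xs" and k: "0 < k"
  shows "j \<le> m * k \<Longrightarrow> allocation (xs j)"
proof (induction j)
  case 0
  then show ?case using run by (simp add: wf_run_def allocation_def)
next
  case (Suc j)
  then show ?case using wf_step_allocation[OF wf_run_step[OF run k]] by simp
qed

lemma wf_run_level_unchanged:
  assumes run: "wf_run k m xs" and k: "0 < k" and j: "j < m * k"
    and w: "w \<notin> open_nbrs k m j" "w \<noteq> u_deadlines k m ! j"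
  shows "level (verts k m) (xs (Suc j)) w = level (verts k m) (xs j) w"
proof -
  have "j < length (u_deadlines k m)" using j k by (simp add: length_u_deadlines)
  then show ?thesis
    using wf_step_levels[OF wf_run_step[OF run k j] finite_verts open_nbrs_subset_verts
        u_deadline_in_verts[OF k j] u_deadline_notin_open_nbrs
        wf_run_allocation[OF run k less_imp_le[OF j]]] w
    by metis
qed

lemma wf_run_saturation:
  assumes run: "wf_run k m xs" and k: "0 < k" and j: "j < m * k"
    and N: "open_nbrs k m j \<noteq> {}" and below: "\<forall>v\<in>open_nbrs k m j. level (verts k m) (xs j) v \<le> B"
  shows "\<forall>w\<in>open_nbrs k m j. level (verts k m) (xs (Suc j)) w \<le> B + 1 / card (open_nbrs k m j)"
    and "B + 1 / card (open_nbrs k m j) \<le> 1 \<Longrightarrow>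
      level (verts k m) (xs (Suc j)) (u_deadlines k m ! j) = 1"
proof -
  have "j < length (u_deadlines k m)" using j k by (simp add: length_u_deadlines)
  note sat = wf_step_saturation[OF wf_run_step[OF run k j] finite_verts open_nbrs_subset_verts
      u_deadline_in_verts[OF k j] u_deadline_notin_open_nbrs[OF this]
      wf_run_allocation[OF run k less_imp_le[OF j]] N below]
  show "\<forall>w\<in>open_nbrs k m j. level (verts k m) (xs (Suc j)) w \<le> B + 1 / card (open_nbrs k m j)"
    by (fact sat(1))
  show "B + 1 / card (open_nbrs k m j) \<le> 1 \<Longrightarrow>
      level (verts k m) (xs (Suc j)) (u_deadlines k m ! j) = 1"
    by (fact sat(2))
qed

lemma wf_run_layer_level_le:
  assumes run: "wf_run k m xs" and k: "0 < k"
  shows "j \<le> m * k \<Longrightarrow> j \<le> t * k \<Longrightarrow> w \<in> layer t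
    \<Longrightarrow> level (verts k m) (xs j) w \<le> layer_bound k m t j"
proof (induction j arbitrary: w)
  case 0
  then show ?case using run layer_bound_nonneg[of k m t 0] by (simp add: wf_run_def level_def)
next
  case (Suc j)
  let ?N = "open_nbrs k m j"
  have j: "j < m * k" using Suc.prems(1) by simp
  have IH: "\<forall>v\<in>layer t. level (verts k m) (xs j) v \<le> layer_bound k m t j"
    using Suc.IH Suc.prems(1,2) by simp
  show ?case
  proof (cases "w \<in> ?N")
    case True
    then have t: "j div k + 1 = t"
      using open_nbrs_subset_layer[OF k j] Suc.prems(3) layer_unique by blast
    then have "\<forall>v\<in>?N. level (verts k m) (xs j) v \<le> layer_bound k m t j"
      using open_nbrs_subset_layer[OF k j] IH by auto
    then have "level (verts k m) (xs (Suc j)) w \<le> layer_bound k m t j + 1 / card ?N"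
      using wf_run_saturation(1)[OF run k j] True by blast
    moreover have "(t - 1) * k \<le> j"
      using t by (metis add_diff_cancel_right' div_times_less_eq_dividend)
    ultimately show ?thesis by (simp add: layer_bound_Suc)
  next
    case False
    have "j div k < t" using Suc.prems(2) k by (simp add: div_less_iff_less_mult)
    then have "u_deadlines k m ! j \<notin> layer t"
      using nth_u_deadlines[OF k j] by (auto simp: layer_def)
    then have "level (verts k m) (xs (Suc j)) w = level (verts k m) (xs j) w"
      using wf_run_level_unchanged[OF run k j False] Suc.prems(3) by blast
    also have "\<dots> \<le> layer_bound k m t j" using IH Suc.prems(3) by blast
    also have "\<dots> \<le> layer_bound k m t (Suc j)" by (rule layer_bound_mono) simp
    finally show ?thesis .
  qed
qed

lemma wf_run_deadline_saturated:
  assumes run: "wf_run k m xs" and k: "5000 \<le> k"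
    and j: "j < m * k" and row: "j div k + 1 \<le> m - 1"
  shows "level (verts k m) (xs (Suc j)) (u_deadlines k m ! j) = 1"
proof -
  define t where "t = j div k + 1"
  let ?N = "open_nbrs k m j"
  have kpos: "0 < k" using k by simp
  have row_start: "(t - 1) * k \<le> j" and row_end: "Suc j \<le> t * k"
    using kpos div_times_less_eq_dividend[of j k] dividend_less_div_times[of k j]
    by (simp_all add: t_def)
  have "k - j mod k + forward_degree k (j mod k) \<le> card ?N"
    by (rule card_open_nbrs_ge[OF kpos j row])
  moreover have "j mod k < k" using kpos by simp
  ultimately have "?N \<noteq> {}" by auto
  moreover have "\<forall>v\<in>?N. level (verts k m) (xs j) v \<le> layer_bound k m t j"
    using wf_run_layer_level_le[OF run kpos] open_nbrs_subset_layer[OF kpos j] j row_end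
    by (auto simp: t_def)
  moreover have "layer_bound k m t j + 1 / card ?N \<le> 1"
  proof -
    have "layer_bound k m t j + 1 / card ?N = layer_bound k m t (Suc j)"
      using layer_bound_Suc[OF row_start] by simp
    also have "\<dots> \<le> layer_bound k m t (t * k)" by (rule layer_bound_mono[OF row_end])
    also have "\<dots> \<le> 1" using row by (intro layer_bound_row_le_1[OF k]) (simp_all add: t_def)
    finally show ?thesis .
  qed
  ultimately show ?thesis by (rule wf_run_saturation(2)[OF run kpos j])
qed

theorem corollary3p4:
  shows "\<exists>K::nat. \<forall>k\<ge>K. \<forall>m::nat. \<forall>xs. wf_run k m xs \<longrightarrow>
           (\<forall>j t i. j < length (u_deadlines k m) \<and> u_deadlines k m ! j = U t i \<and>
                    1 \<le> t \<and> t \<le> m - 1 \<and> 1 \<le> i \<and> i \<le> k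
              \<longrightarrow> level (verts k m) (xs (Suc j)) (U t i) = 1)"
proof (intro exI[of _ 5000] allI impI)
  fix k m xs j t i
  assume k: "5000 \<le> k" and run: "wf_run k m xs"
    and H: "j < length (u_deadlines k m) \<and> u_deadlines k m ! j = U t i \<and>
      1 \<le> t \<and> t \<le> m - 1 \<and> 1 \<le> i \<and> i \<le> k"
  have j: "j < m * k" using H k length_u_deadlines[of k m] by simp
  then have "t = j div k + 1" using H k nth_u_deadlines[of k j m] by simp
  then show "level (verts k m) (xs (Suc j)) (U t i) = 1"
    using wf_run_deadline_saturated[OF run k j] H by simp
qed

end
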